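(* Let $(\mathcal S,\mu)$ be a probability space and $a,b\ge0$. For all $W_1,W_2\in\mathcal W$, $$\|W_1^{(a,b)}-W_2^{(a,b)}\|_\square\le7\|W_1-W_2\|_\square.$$ Moreover, for every $W\in\mathcal W$, if $a>0$ then $\sup_x\lambda_{W^{(a,b)}}(x)\le e^{-1}/a$, and if $b>0$ then $\sup_y\lambda'_{W^{(a,b)}}(y)\le e^{-1}/b$.
   Context: $\mathcal W$ is the set of integrable measurable $W:\mathcal S^2\to[0,\infty)$ (not necessarily symmetric). Marginals: $\lambda_W(x)=\int W(x,y)\,d\mu(y)$ and $\lambda'_W(y)=\int W(x,y)\,d\mu(x)$ (values in $[0,\infty]$). For $a,b\ge0$, $W^{(a,b)}(x,y)=e^{-a\lambda_W(x)}W(x,y)e^{-b\lambda'_W(y)}$. Cut norm: $\|W\|_\square=\sup_{\|f\|_\infty,\|g\|_\infty\le1}|\int f(x)g(y)W(x,y)\,d\mu(x)d\mu(y)|$. *)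

theory Defs
  imports "HOL-Probability.Probability"
begin

definition kernels :: "'a measure \<Rightarrow> ('a \<times> 'a \<Rightarrow> real) set" where
  "kernels M = {W. W \<in> borel_measurable (M \<Otimes>\<^sub>M M) \<and> integrable (M \<Otimes>\<^sub>M M) W
                   \<and> (\<forall>z. 0 \<le> W z)}"

definition lmarg :: "'a measure \<Rightarrow> ('a \<times> 'a \<Rightarrow> real) \<Rightarrow> 'a \<Rightarrow> ennreal" where
  "lmarg M W x = (\<integral>\<^sup>+ y. ennreal (W (x, y)) \<partial>M)"

definition rmarg :: "'a measure \<Rightarrow> ('a \<times> 'a \<Rightarrow> real) \<Rightarrow> 'a \<Rightarrow> ennreal" where
  "rmarg M W y = (\<integral>\<^sup>+ x. ennreal (W (x, y)) \<partial>M)"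

text \<open>exp(-a * l) for l in [0,infinity], with exp(-a*infinity) = 0 for a > 0
  and exp(-0 * l) = 1.\<close>
definition exp_neg :: "real \<Rightarrow> ennreal \<Rightarrow> real" where
  "exp_neg a l = (if l = \<infinity> then (if a = 0 then 1 else 0) else exp (- a * enn2real l))"

definition tilt :: "'a measure \<Rightarrow> real \<Rightarrow> real \<Rightarrow> ('a \<times> 'a \<Rightarrow> real) \<Rightarrow> ('a \<times> 'a \<Rightarrow> real)" where
  "tilt M a b W = (\<lambda>(x, y). exp_neg a (lmarg M W x) * W (x, y) * exp_neg b (rmarg M W y))"

definition cut_norm :: "'a measure \<Rightarrow> ('a \<times> 'a \<Rightarrow> real) \<Rightarrow> real" where
  "cut_norm M W = (SUP fg \<in> {(f, g). f \<in> borel_measurable M \<and> g \<in> borel_measurable M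
                         \<and> (\<forall>x. \<bar>f x\<bar> \<le> 1) \<and> (\<forall>y. \<bar>g y\<bar> \<le> 1)}.
        \<bar>\<integral> z. fst fg (fst z) * snd fg (snd z) * W z \<partial>(M \<Otimes>\<^sub>M M)\<bar>)"

end

theory Submission
  imports Defs
begin

text \<open>
  Write the tilt of W as u(x) W(x,y) v(y) with u = exp(-a lambda_W) and v = exp(-b lambda'_W);
  both factors take values in [0,1].  For two kernels split
    u1 W1 v1 - u2 W2 v2 = u1 (W1 - W2) v1 + (u1 - u2) W2 v1 + u2 W2 (v1 - v2).
  The first term is a cut-norm test integral of W1 - W2.  For the second, the scalar bound
  |exp(-a p) - exp(-a t)| t <= (1 + 1/e) |p - t| turns it into (1 + 1/e) times the L1 distance
  of the row integrals, and testing W1 - W2 against the sign of its row integrals shows that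
  this distance is at most the cut norm of W1 - W2.  The third term is the second one for the
  transposed kernels.  Altogether the tilt is Lipschitz with constant 3 + 2/e <= 7.  The
  marginal bound follows from lambda_{tilt W} <= exp(-a lambda_W) lambda_W <= 1/(e a), the
  right marginal again by transposition.
\<close>

lemma exp_neg_nonneg: "0 \<le> exp_neg a l"
  by (simp add: exp_neg_def)

lemma exp_neg_le_one: "0 \<le> a \<Longrightarrow> exp_neg a l \<le> 1"
  by (simp add: exp_neg_def enn2real_nonneg)

lemma abs_exp_neg_diff_le_one: "0 \<le> a \<Longrightarrow> \<bar>exp_neg a l - exp_neg a m\<bar> \<le> 1"
  using exp_neg_nonneg[of a l] exp_neg_nonneg[of a m] exp_neg_le_one[of a l] exp_neg_le_one[of a m]
  by linarith

lemma exp_neg_ennreal: "0 \<le> t \<Longrightarrow> exp_neg a (ennreal t) = exp (- a * t)"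
  by (simp add: exp_neg_def)

lemma borel_measurable_exp_neg [measurable]:
  assumes [measurable]: "l \<in> borel_measurable M"
  shows "(\<lambda>x. exp_neg a (l x)) \<in> borel_measurable M"
  unfolding exp_neg_def by measurable

lemma mul_exp_neg_le: fixes s :: real assumes "0 \<le> s" shows "s * exp (- s) \<le> exp (-1)"
proof -
  have "s * exp (- s) \<le> exp (s - 1) * exp (- s)"
    using exp_ge_add_one_self[of "s - 1"] by (intro mult_right_mono) auto
  also have "\<dots> = exp (-1)" by (simp flip: exp_add)
  finally show ?thesis .
qed

text \<open>The drop of \<open>e\<^sup>-\<^sup>a\<^sup>s\<close> between \<open>s \<le> r\<close>, weighted by the smaller point, is at most
  \<open>(r - s)/e\<close>: use \<open>1 - e\<^sup>-\<^sup>x \<le> x\<close> and the previous lemma.\<close>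
lemma exp_decrement_weighted:
  fixes a s r :: real
  assumes "0 \<le> a" "0 \<le> s" "s \<le> r"
  shows "(exp (- a * s) - exp (- a * r)) * s \<le> exp (-1) * (r - s)"
proof -
  have "exp (- a * s) - exp (- a * r) = exp (- a * s) * (1 - exp (- (a * (r - s))))"
    by (simp add: algebra_simps flip: exp_add)
  also have "\<dots> \<le> exp (- a * s) * (a * (r - s))"
    using exp_ge_add_one_self[of "- (a * (r - s))"] by (intro mult_left_mono) auto
  finally have "(exp (- a * s) - exp (- a * r)) * s \<le> exp (- a * s) * (a * (r - s)) * s"
    using assms(2) by (rule mult_right_mono)
  also have "\<dots> = (a * s * exp (- (a * s))) * (r - s)" by (simp add: algebra_simps)
  also have "\<dots> \<le> exp (-1) * (r - s)"
    using assms mul_exp_neg_le[of "a * s"] by (intro mult_right_mono) auto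
  finally show ?thesis .
qed

lemma exp_gap_weighted:
  fixes a p t :: real
  assumes "0 \<le> a" "0 \<le> p" "0 \<le> t"
  shows "\<bar>exp (- a * p) - exp (- a * t)\<bar> * t \<le> (1 + exp (-1)) * \<bar>p - t\<bar>"
proof (cases "p \<le> t")
  case True
  have mono: "exp (- a * t) \<le> exp (- a * p)" using assms True by (simp add: mult_left_mono)
  have "exp (- a * p) \<le> 1" using assms by simp
  then have le_one: "exp (- a * p) - exp (- a * t) \<le> 1" using exp_gt_zero[of "- a * t"] by linarith
  have "\<bar>exp (- a * p) - exp (- a * t)\<bar> * t
      = (exp (- a * p) - exp (- a * t)) * p + (exp (- a * p) - exp (- a * t)) * (t - p)"
    using mono by (simp add: algebra_simps)
  also have "\<dots> \<le> exp (-1) * (t - p) + 1 * (t - p)"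
    using exp_decrement_weighted[OF assms(1,2) True] le_one True by (intro add_mono mult_right_mono) auto
  finally show ?thesis using True by (simp add: algebra_simps)
next
  case False
  have mono: "exp (- a * p) \<le> exp (- a * t)" using assms False by (simp add: mult_left_mono)
  have "\<bar>exp (- a * p) - exp (- a * t)\<bar> * t = (exp (- a * t) - exp (- a * p)) * t"
    using mono by simp
  also have "\<dots> \<le> exp (-1) * (p - t)"
    using exp_decrement_weighted[OF assms(1,3)] False by simp
  also have "\<dots> \<le> (1 + exp (-1)) * \<bar>p - t\<bar>" using False by simp
  finally show ?thesis .
qed

lemma exp_neg_times_le:
  assumes a: "0 < a"
  shows "ennreal (exp_neg a l) * l \<le> ennreal (exp (-1) / a)"
proof (cases l)
  case (real t)
  have "exp (- a * t) * t \<le> exp (-1) / a"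
    using mul_exp_neg_le[of "a * t"] a real by (simp add: pos_le_divide_eq algebra_simps)
  then show ?thesis
    using real by (simp add: exp_neg_ennreal ennreal_mult[symmetric] ennreal_leI)
next
  case top
  then show ?thesis using a by (simp add: exp_neg_def)
qed

definition test_pairs :: "'a measure \<Rightarrow> (('a \<Rightarrow> real) \<times> ('a \<Rightarrow> real)) set" where
  "test_pairs M = {(f, g). f \<in> borel_measurable M \<and> g \<in> borel_measurable M
                          \<and> (\<forall>x. \<bar>f x\<bar> \<le> 1) \<and> (\<forall>y. \<bar>g y\<bar> \<le> 1)}"

lemma test_pairsI:
  "f \<in> borel_measurable M \<Longrightarrow> g \<in> borel_measurable M \<Longrightarrow> (\<And>x. \<bar>f x\<bar> \<le> 1) \<Longrightarrow> (\<And>y. \<bar>g y\<bar> \<le> 1)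
    \<Longrightarrow> (f, g) \<in> test_pairs M"
  by (simp add: test_pairs_def)

lemma cut_norm_test_pairs:
  "cut_norm M W = (SUP (f, g) \<in> test_pairs M. \<bar>\<integral>z. f (fst z) * g (snd z) * W z \<partial>(M \<Otimes>\<^sub>M M)\<bar>)"
  by (simp add: cut_norm_def test_pairs_def split_beta')

lemma integrable_bounded_multiplier:
  fixes W \<phi> :: "'b \<Rightarrow> real"
  assumes "integrable N W" "\<phi> \<in> borel_measurable N" "\<And>z. \<bar>\<phi> z\<bar> \<le> 1"
  shows "integrable N (\<lambda>z. \<phi> z * W z)"
proof (rule Bochner_Integration.integrable_bound[OF assms(1)])
  show "(\<lambda>z. \<phi> z * W z) \<in> borel_measurable N" using assms by measurable
  show "AE z in N. norm (\<phi> z * W z) \<le> norm (W z)"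
    using assms(3) by (auto simp: abs_mult intro!: mult_left_le_one_le)
qed

lemma integrable_bounded_sandwich:
  fixes W \<phi> \<psi> :: "'b \<Rightarrow> real"
  assumes "integrable N W" "\<phi> \<in> borel_measurable N" "\<psi> \<in> borel_measurable N"
    and "\<And>z. \<bar>\<phi> z\<bar> \<le> 1" "\<And>z. \<bar>\<psi> z\<bar> \<le> 1"
  shows "integrable N (\<lambda>z. \<phi> z * W z * \<psi> z)"
proof -
  have "integrable N (\<lambda>z. (\<phi> z * \<psi> z) * W z)"
    using assms by (intro integrable_bounded_multiplier) (auto simp: abs_mult intro: mult_le_one)
  then show ?thesis by (simp add: ac_simps)
qed

text \<open>Every test integral is bounded by the cut norm (the supremum is bounded by the L1 norm).\<close>
lemma cut_norm_upper:
  fixes W :: "'a \<times> 'a \<Rightarrow> real"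
  assumes W: "integrable (M \<Otimes>\<^sub>M M) W" and fg: "(f, g) \<in> test_pairs M"
  shows "\<bar>\<integral>z. f (fst z) * g (snd z) * W z \<partial>(M \<Otimes>\<^sub>M M)\<bar> \<le> cut_norm M W"
proof -
  let ?value = "\<lambda>(f, g). \<bar>\<integral>z. f (fst z) * g (snd z) * W z \<partial>(M \<Otimes>\<^sub>M M)\<bar>"
  have "?value (f', g') \<le> (\<integral>z. \<bar>W z\<bar> \<partial>(M \<Otimes>\<^sub>M M))" if "(f', g') \<in> test_pairs M" for f' g'
  proof -
    have [measurable]: "f' \<in> borel_measurable M" "g' \<in> borel_measurable M"
      and bounded: "\<bar>f' (fst z) * g' (snd z)\<bar> \<le> 1" for z
      using that by (auto simp: test_pairs_def abs_mult intro: mult_le_one)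
    have "integrable (M \<Otimes>\<^sub>M M) (\<lambda>z. f' (fst z) * g' (snd z) * W z)"
      by (rule integrable_bounded_multiplier[OF W]) (use bounded in auto)
    moreover have "\<bar>f' (fst z) * g' (snd z) * W z\<bar> \<le> \<bar>W z\<bar>" for z
      using mult_right_mono[OF bounded[of z] abs_ge_zero[of "W z"]] by (simp add: abs_mult)
    ultimately show ?thesis
      using W by (auto intro!: integral_abs_bound[THEN order_trans] integral_mono)
  qed
  then have "bdd_above (?value ` test_pairs M)" by (intro bdd_aboveI2) auto
  from cSUP_upper[OF fg this] show ?thesis by (simp add: cut_norm_test_pairs)
qed

lemma cut_norm_nonneg: "integrable (M \<Otimes>\<^sub>M M) W \<Longrightarrow> 0 \<le> cut_norm M W"
  using cut_norm_upper[of M W "\<lambda>_. 0" "\<lambda>_. 0"] by (auto simp: test_pairs_def)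

text \<open>Transposition \<open>W\<^sup>T(x,y) = W(y,x)\<close> exchanges left and right marginals and the two
  tilting parameters; it lets every right-hand statement be derived from its left-hand one.\<close>
definition kernel_transpose :: "('a \<times> 'a \<Rightarrow> 'b) \<Rightarrow> 'a \<times> 'a \<Rightarrow> 'b" where
  "kernel_transpose W = (\<lambda>(x, y). W (y, x))"

lemma kernel_transpose_apply [simp]: "kernel_transpose W (x, y) = W (y, x)"
  by (simp add: kernel_transpose_def)

lemma lmarg_transpose: "lmarg M (kernel_transpose W) = rmarg M W"
  and rmarg_transpose: "rmarg M (kernel_transpose W) = lmarg M W"
  by (simp_all add: fun_eq_iff lmarg_def rmarg_def)

lemma tilt_transpose: "kernel_transpose (tilt M a b W) = tilt M b a (kernel_transpose W)"
  by (simp add: fun_eq_iff tilt_def lmarg_transpose rmarg_transpose)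

lemma measurable_kernel_transpose [measurable]:
  "W \<in> borel_measurable (M \<Otimes>\<^sub>M M) \<Longrightarrow> kernel_transpose W \<in> borel_measurable (M \<Otimes>\<^sub>M M)"
  using measurable_compose[OF measurable_pair_swap'] by (simp add: kernel_transpose_def)

context sigma_finite_measure
begin

lemma integral_kernel_transpose:
  fixes W :: "'a \<times> 'a \<Rightarrow> real"
  assumes "W \<in> borel_measurable (M \<Otimes>\<^sub>M M)"
  shows "integral\<^sup>L (M \<Otimes>\<^sub>M M) (kernel_transpose W) = integral\<^sup>L (M \<Otimes>\<^sub>M M) W"
proof -
  interpret pair_sigma_finite M M ..
  show ?thesis
    using integral_product_swap[OF assms] by (simp add: kernel_transpose_def)
qed

lemma integrable_kernel_transpose:
  fixes W :: "'a \<times> 'a \<Rightarrow> real"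
  shows "integrable (M \<Otimes>\<^sub>M M) (kernel_transpose W) \<longleftrightarrow> integrable (M \<Otimes>\<^sub>M M) W"
proof -
  interpret pair_sigma_finite M M ..
  show ?thesis
    using integrable_product_swap_iff[of W] by (simp add: kernel_transpose_def)
qed

lemma kernels_transpose: "W \<in> kernels M \<Longrightarrow> kernel_transpose W \<in> kernels M"
  unfolding kernels_def using integrable_kernel_transpose[of W]
  by (auto simp: split: prod.splits)

text \<open>The cut norm does not see the orientation of a kernel: transposing the integrand
  just exchanges the roles of the two test functions.\<close>
lemma cut_norm_transpose:
  fixes W :: "'a \<times> 'a \<Rightarrow> real"
  assumes [measurable]: "W \<in> borel_measurable (M \<Otimes>\<^sub>M M)"
  shows "cut_norm M (kernel_transpose W) = cut_norm M W"
proof -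
  let ?value = "\<lambda>(f, g). \<bar>\<integral>z. f (fst z) * g (snd z) * W z \<partial>(M \<Otimes>\<^sub>M M)\<bar>"
  have swap: "(\<integral>z. f (fst z) * g (snd z) * kernel_transpose W z \<partial>(M \<Otimes>\<^sub>M M))
      = (\<integral>z. g (fst z) * f (snd z) * W z \<partial>(M \<Otimes>\<^sub>M M))" if "(f, g) \<in> test_pairs M" for f g
  proof -
    have [measurable]: "f \<in> borel_measurable M" "g \<in> borel_measurable M"
      using that by (auto simp: test_pairs_def)
    have "(\<lambda>z. f (fst z) * g (snd z) * kernel_transpose W z)
        = kernel_transpose (\<lambda>z. g (fst z) * f (snd z) * W z)"
      by (auto simp: fun_eq_iff mult.commute)
    then show ?thesis by (simp add: integral_kernel_transpose)
  qed
  have pairs_swap: "prod.swap ` test_pairs M = test_pairs M"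
    by (auto simp: test_pairs_def image_iff)
  have "cut_norm M (kernel_transpose W) = (SUP fg \<in> test_pairs M. ?value (prod.swap fg))"
    unfolding cut_norm_test_pairs by (intro SUP_cong) (auto simp: swap)
  also have "\<dots> = (SUP fg \<in> prod.swap ` test_pairs M. ?value fg)"
    by (simp add: image_comp)
  finally show ?thesis by (simp add: pairs_swap cut_norm_test_pairs)
qed

lemma measurable_lmarg [measurable]:
  assumes [measurable]: "W \<in> borel_measurable (M \<Otimes>\<^sub>M M)"
  shows "lmarg M W \<in> borel_measurable M"
  unfolding lmarg_def by (rule borel_measurable_nn_integral) measurable

lemma measurable_rmarg [measurable]:
  "W \<in> borel_measurable (M \<Otimes>\<^sub>M M) \<Longrightarrow> rmarg M W \<in> borel_measurable M"
  using measurable_lmarg[of "kernel_transpose W"] by (simp add: lmarg_transpose)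

lemma exp_neg_lmarg_AE:
  assumes "W \<in> kernels M"
  shows "AE x in M. integrable M (\<lambda>y. W (x, y))
                   \<and> exp_neg a (lmarg M W x) = exp (- a * (\<integral>y. W (x, y) \<partial>M))"
proof -
  interpret P: pair_sigma_finite M M ..
  have nonneg: "\<And>z. 0 \<le> W z" and "integrable (M \<Otimes>\<^sub>M M) W"
    using assms by (auto simp: kernels_def)
  from P.AE_integrable_fst'[OF this(2)] show ?thesis
  proof eventually_elim
    case (elim x)
    then show ?case
      using nonneg by (simp add: lmarg_def nn_integral_eq_integral integral_nonneg exp_neg_ennreal)
  qed
qed

text \<open>Testing against the sign of the row integrals shows that the cut norm controls the
  L1 norm of the row integrals.\<close>
lemma row_integral_abs_le_cut_norm:
  fixes W :: "'a \<times> 'a \<Rightarrow> real"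
  assumes W: "integrable (M \<Otimes>\<^sub>M M) W"
  shows "(\<integral>x. \<bar>\<integral>y. W (x, y) \<partial>M\<bar> \<partial>M) \<le> cut_norm M W"
proof -
  interpret P: pair_sigma_finite M M ..
  define row where "row x = (\<integral>y. W (x, y) \<partial>M)" for x
  define s where "s x = sgn (row x)" for x
  have [measurable]: "row \<in> borel_measurable M"
    using P.integrable_fst'[OF W] by (simp add: row_def[abs_def])
  have [measurable]: "s \<in> borel_measurable M" unfolding s_def by measurable
  have s_bounded: "\<bar>s x\<bar> \<le> 1" for x by (simp add: s_def sgn_if)
  have signed: "integrable (M \<Otimes>\<^sub>M M) (\<lambda>z. s (fst z) * (\<lambda>_. 1) (snd z) * W z)"
    using s_bounded by (intro integrable_bounded_multiplier[OF W]) auto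
  have "(\<integral>x. \<bar>row x\<bar> \<partial>M) = (\<integral>x. (\<integral>y. s x * W (x, y) \<partial>M) \<partial>M)"
    by (intro Bochner_Integration.integral_cong) (auto simp: s_def row_def sgn_mult_abs[symmetric] abs_sgn)
  also have "\<dots> = (\<integral>z. s (fst z) * (\<lambda>_. 1) (snd z) * W z \<partial>(M \<Otimes>\<^sub>M M))"
    using P.integral_fst'[OF signed] by simp
  also have "\<dots> \<le> cut_norm M W"
    using cut_norm_upper[OF W, of s "\<lambda>_. 1"] s_bounded by (force intro: test_pairsI)
  finally show ?thesis by (simp add: row_def)
qed

lemma row_weighted_factor_gap_AE:
  fixes W1 W2 :: "'a \<times> 'a \<Rightarrow> real"
  assumes a: "0 \<le> a" and K1: "W1 \<in> kernels M" and K2: "W2 \<in> kernels M"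
  shows "AE x in M. \<bar>exp_neg a (lmarg M W1 x) - exp_neg a (lmarg M W2 x)\<bar> * (\<integral>y. W2 (x, y) \<partial>M)
                     \<le> (1 + exp (-1)) * \<bar>\<integral>y. W1 (x, y) - W2 (x, y) \<partial>M\<bar>"
  using exp_neg_lmarg_AE[OF K1, of a] exp_neg_lmarg_AE[OF K2, of a]
proof eventually_elim
  case (elim x)
  have "0 \<le> (\<integral>y. W1 (x, y) \<partial>M)" "0 \<le> (\<integral>y. W2 (x, y) \<partial>M)"
    using K1 K2 by (auto simp: kernels_def)
  then show ?case
    using exp_gap_weighted[OF a] elim by auto
qed

text \<open>Changing the left tilting factor from the one of \<open>W\<^sub>2\<close> to the one of \<open>W\<^sub>1\<close> moves any
  bounded test integral of \<open>W\<^sub>2\<close> by at most \<open>1 + 1/e\<close> times the cut norm of \<open>W\<^sub>1 - W\<^sub>2\<close>: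
  integrate the pointwise estimate above and apply row_integral_abs_le_cut_norm.\<close>
lemma left_factor_gap:
  fixes W1 W2 h :: "'a \<times> 'a \<Rightarrow> real"
  assumes a: "0 \<le> a" and K1: "W1 \<in> kernels M" and K2: "W2 \<in> kernels M"
    and [measurable]: "h \<in> borel_measurable (M \<Otimes>\<^sub>M M)" and h_bounded: "\<And>z. \<bar>h z\<bar> \<le> 1"
  shows "\<bar>\<integral>z. (exp_neg a (lmarg M W1 (fst z)) - exp_neg a (lmarg M W2 (fst z))) * W2 z * h z
            \<partial>(M \<Otimes>\<^sub>M M)\<bar> \<le> (1 + exp (-1)) * cut_norm M (\<lambda>z. W1 z - W2 z)"
proof -
  interpret P: pair_sigma_finite M M ..
  have [measurable]: "W1 \<in> borel_measurable (M \<Otimes>\<^sub>M M)" "W2 \<in> borel_measurable (M \<Otimes>\<^sub>M M)"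
    and W1: "integrable (M \<Otimes>\<^sub>M M) W1" and W2: "integrable (M \<Otimes>\<^sub>M M) W2"
    and W2_nonneg: "\<And>z. 0 \<le> W2 z"
    using K1 K2 by (auto simp: kernels_def)
  define u1 where "u1 x = exp_neg a (lmarg M W1 x)" for x
  define u2 where "u2 x = exp_neg a (lmarg M W2 x)" for x
  define gap where "gap x = \<bar>u1 x - u2 x\<bar>" for x
  define row2 where "row2 x = (\<integral>y. W2 (x, y) \<partial>M)" for x
  have [measurable]: "gap \<in> borel_measurable M" unfolding gap_def u1_def u2_def by measurable
  have gap_bounded: "\<bar>gap x\<bar> \<le> 1" for x
    using abs_exp_neg_diff_le_one[OF a] by (simp add: gap_def u1_def u2_def)
  have weighted: "integrable (M \<Otimes>\<^sub>M M) (\<lambda>z. gap (fst z) * W2 z)"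
    using gap_bounded by (intro integrable_bounded_multiplier[OF W2]) auto
  have integrand: "integrable (M \<Otimes>\<^sub>M M) (\<lambda>z. (u1 (fst z) - u2 (fst z)) * W2 z * h z)"
    using gap_bounded h_bounded unfolding u1_def u2_def gap_def
    by (intro integrable_bounded_sandwich[OF W2]) auto
  have "\<bar>\<integral>z. (u1 (fst z) - u2 (fst z)) * W2 z * h z \<partial>(M \<Otimes>\<^sub>M M)\<bar>
      \<le> (\<integral>z. gap (fst z) * W2 z \<partial>(M \<Otimes>\<^sub>M M))"
  proof (rule integral_abs_bound[THEN order_trans], rule integral_mono)
    show "\<bar>(u1 (fst z) - u2 (fst z)) * W2 z * h z\<bar> \<le> gap (fst z) * W2 z" for z
      using mult_left_mono[OF h_bounded[of z], of "gap (fst z) * W2 z"] W2_nonneg[of z]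
      by (simp add: gap_def abs_mult)
  qed (use integrand weighted in simp_all)
  also have "\<dots> = (\<integral>x. gap x * row2 x \<partial>M)"
    using P.integral_fst'[OF weighted] by (simp add: row2_def)
  also have "\<dots> \<le> (\<integral>x. (1 + exp (-1)) * \<bar>\<integral>y. W1 (x, y) - W2 (x, y) \<partial>M\<bar> \<partial>M)"
  proof (rule integral_mono_AE)
    show "integrable M (\<lambda>x. gap x * row2 x)"
      using P.integrable_fst'[OF weighted] by (simp add: row2_def)
    show "integrable M (\<lambda>x. (1 + exp (-1)) * \<bar>\<integral>y. W1 (x, y) - W2 (x, y) \<partial>M\<bar>)"
      using P.integrable_fst'[of "\<lambda>z. W1 z - W2 z"] W1 W2 by auto
  qed (use row_weighted_factor_gap_AE[OF a K1 K2] in \<open>simp add: gap_def u1_def u2_def row2_def\<close>)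
  also have "\<dots> \<le> (1 + exp (-1)) * cut_norm M (\<lambda>z. W1 z - W2 z)"
    using row_integral_abs_le_cut_norm[of "\<lambda>z. W1 z - W2 z"] W1 W2
    by (simp add: mult_left_mono add_nonneg_nonneg)
  finally show ?thesis by (simp add: u1_def u2_def)
qed

text \<open>The mirror statement for the right tilting factor, obtained by transposition.\<close>
lemma right_factor_gap:
  fixes W1 W2 h :: "'a \<times> 'a \<Rightarrow> real"
  assumes b: "0 \<le> b" and K1: "W1 \<in> kernels M" and K2: "W2 \<in> kernels M"
    and [measurable]: "h \<in> borel_measurable (M \<Otimes>\<^sub>M M)" and h_bounded: "\<And>z. \<bar>h z\<bar> \<le> 1"
  shows "\<bar>\<integral>z. (exp_neg b (rmarg M W1 (snd z)) - exp_neg b (rmarg M W2 (snd z))) * W2 z * h z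
            \<partial>(M \<Otimes>\<^sub>M M)\<bar> \<le> (1 + exp (-1)) * cut_norm M (\<lambda>z. W1 z - W2 z)"
proof -
  have [measurable]: "W1 \<in> borel_measurable (M \<Otimes>\<^sub>M M)" "W2 \<in> borel_measurable (M \<Otimes>\<^sub>M M)"
    using K1 K2 by (auto simp: kernels_def)
  define T1 where "T1 = kernel_transpose W1"
  define T2 where "T2 = kernel_transpose W2"
  define F where "F z = (exp_neg b (lmarg M T1 (fst z)) - exp_neg b (lmarg M T2 (fst z)))
                         * T2 z * kernel_transpose h z" for z
  have [measurable]: "F \<in> borel_measurable (M \<Otimes>\<^sub>M M)"
    unfolding F_def T1_def T2_def by measurable
  have "(\<lambda>z. (exp_neg b (rmarg M W1 (snd z)) - exp_neg b (rmarg M W2 (snd z))) * W2 z * h z)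
      = kernel_transpose F"
    by (auto simp: fun_eq_iff F_def T1_def T2_def lmarg_transpose)
  moreover have "cut_norm M (\<lambda>z. T1 z - T2 z) = cut_norm M (\<lambda>z. W1 z - W2 z)"
  proof -
    have "(\<lambda>z. T1 z - T2 z) = kernel_transpose (\<lambda>z. W1 z - W2 z)"
      by (auto simp: fun_eq_iff T1_def T2_def)
    then show ?thesis by (simp add: cut_norm_transpose)
  qed
  moreover have "\<bar>integral\<^sup>L (M \<Otimes>\<^sub>M M) F\<bar> \<le> (1 + exp (-1)) * cut_norm M (\<lambda>z. T1 z - T2 z)"
    unfolding F_def T1_def T2_def using h_bounded
    by (intro left_factor_gap b kernels_transpose K1 K2) (auto simp: kernel_transpose_def)
  ultimately show ?thesis by (simp add: integral_kernel_transpose)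
qed

lemma tilt_diff_split:
  "tilt M a b W1 z - tilt M a b W2 z
     = exp_neg a (lmarg M W1 (fst z)) * (W1 z - W2 z) * exp_neg b (rmarg M W1 (snd z))
     + (exp_neg a (lmarg M W1 (fst z)) - exp_neg a (lmarg M W2 (fst z))) * W2 z
         * exp_neg b (rmarg M W1 (snd z))
     + exp_neg a (lmarg M W2 (fst z)) * W2 z
         * (exp_neg b (rmarg M W1 (snd z)) - exp_neg b (rmarg M W2 (snd z)))"
  by (cases z) (simp add: tilt_def algebra_simps)

text \<open>In the decomposition above, the first
  term is a test integral of \<open>W\<^sub>1 - W\<^sub>2\<close> (the factors are bounded by 1) and the other two are
  the factor gaps, giving the constant \<open>1 + 2 (1 + 1/e)\<close>.\<close>
lemma tilt_test_integral_bound: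
  fixes W1 W2 :: "'a \<times> 'a \<Rightarrow> real"
  assumes a: "0 \<le> a" and b: "0 \<le> b" and K1: "W1 \<in> kernels M" and K2: "W2 \<in> kernels M"
    and fg: "(f, g) \<in> test_pairs M"
  shows "\<bar>\<integral>z. f (fst z) * g (snd z) * (tilt M a b W1 z - tilt M a b W2 z) \<partial>(M \<Otimes>\<^sub>M M)\<bar>
           \<le> (3 + 2 * exp (-1)) * cut_norm M (\<lambda>z. W1 z - W2 z)"
proof -
  have [measurable]: "W1 \<in> borel_measurable (M \<Otimes>\<^sub>M M)" "W2 \<in> borel_measurable (M \<Otimes>\<^sub>M M)"
    and W1: "integrable (M \<Otimes>\<^sub>M M) W1" and W2: "integrable (M \<Otimes>\<^sub>M M) W2"
    using K1 K2 by (auto simp: kernels_def)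
  have diff: "integrable (M \<Otimes>\<^sub>M M) (\<lambda>z. W1 z - W2 z)" using W1 W2 by simp
  have [measurable]: "f \<in> borel_measurable M" "g \<in> borel_measurable M"
    and f_bounded: "\<And>x. \<bar>f x\<bar> \<le> 1" and g_bounded: "\<And>y. \<bar>g y\<bar> \<le> 1"
    using fg by (auto simp: test_pairs_def)
  let ?c = "cut_norm M (\<lambda>z. W1 z - W2 z)"
  define u1 where "u1 x = exp_neg a (lmarg M W1 x)" for x
  define u2 where "u2 x = exp_neg a (lmarg M W2 x)" for x
  define v1 where "v1 y = exp_neg b (rmarg M W1 y)" for y
  define v2 where "v2 y = exp_neg b (rmarg M W2 y)" for y
  have [measurable]: "u1 \<in> borel_measurable M" "u2 \<in> borel_measurable M"
     "v1 \<in> borel_measurable M" "v2 \<in> borel_measurable M"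
    unfolding u1_def u2_def v1_def v2_def by measurable
  have factor_bounded: "\<bar>u1 x\<bar> \<le> 1" "\<bar>u2 x\<bar> \<le> 1" "\<bar>v1 x\<bar> \<le> 1"
      "\<bar>u1 x - u2 x\<bar> \<le> 1" "\<bar>v1 x - v2 x\<bar> \<le> 1" for x
    using exp_neg_nonneg exp_neg_le_one[OF a] exp_neg_le_one[OF b]
      abs_exp_neg_diff_le_one[OF a] abs_exp_neg_diff_le_one[OF b]
    by (auto simp: u1_def u2_def v1_def v2_def)
  have bounded: "\<bar>p * q\<bar> \<le> 1" if "\<bar>p\<bar> \<le> 1" "\<bar>q\<bar> \<le> 1" for p q :: real
    using that by (simp add: abs_mult mult_le_one)
  define T1 where "T1 z = (f (fst z) * u1 (fst z)) * (g (snd z) * v1 (snd z)) * (W1 z - W2 z)" for z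
  define T2 where "T2 z = (u1 (fst z) - u2 (fst z)) * W2 z * (f (fst z) * (g (snd z) * v1 (snd z)))" for z
  define T3 where "T3 z = (v1 (snd z) - v2 (snd z)) * W2 z * (f (fst z) * (g (snd z) * u2 (fst z)))" for z
  have split: "(\<lambda>z. f (fst z) * g (snd z) * (tilt M a b W1 z - tilt M a b W2 z)) = (\<lambda>z. T1 z + T2 z + T3 z)"
    by (simp add: fun_eq_iff tilt_diff_split T1_def T2_def T3_def u1_def u2_def v1_def v2_def
        algebra_simps)
  have test: "(\<lambda>x. f x * u1 x, \<lambda>y. g y * v1 y) \<in> test_pairs M"
    using f_bounded g_bounded factor_bounded by (intro test_pairsI bounded) auto
  have I1: "integrable (M \<Otimes>\<^sub>M M) T1" unfolding T1_def
    using test by (intro integrable_bounded_multiplier[OF diff]) (auto simp: test_pairs_def intro: bounded)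
  have I2: "integrable (M \<Otimes>\<^sub>M M) T2" and I3: "integrable (M \<Otimes>\<^sub>M M) T3"
    unfolding T2_def T3_def using f_bounded g_bounded factor_bounded
    by (auto intro!: integrable_bounded_sandwich[OF W2] bounded)
  have B1: "\<bar>integral\<^sup>L (M \<Otimes>\<^sub>M M) T1\<bar> \<le> ?c"
    unfolding T1_def using cut_norm_upper[OF diff test] by simp
  have B2: "\<bar>integral\<^sup>L (M \<Otimes>\<^sub>M M) T2\<bar> \<le> (1 + exp (-1)) * ?c"
    unfolding T2_def u1_def u2_def using f_bounded g_bounded factor_bounded
    by (intro left_factor_gap a K1 K2) (auto intro!: bounded)
  have B3: "\<bar>integral\<^sup>L (M \<Otimes>\<^sub>M M) T3\<bar> \<le> (1 + exp (-1)) * ?c"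
    unfolding T3_def v1_def v2_def using f_bounded g_bounded factor_bounded
    by (intro right_factor_gap b K1 K2) (auto intro!: bounded)
  have "\<bar>\<integral>z. f (fst z) * g (snd z) * (tilt M a b W1 z - tilt M a b W2 z) \<partial>(M \<Otimes>\<^sub>M M)\<bar>
      = \<bar>integral\<^sup>L (M \<Otimes>\<^sub>M M) T1 + integral\<^sup>L (M \<Otimes>\<^sub>M M) T2 + integral\<^sup>L (M \<Otimes>\<^sub>M M) T3\<bar>"
    unfolding split using I1 I2 I3 by simp
  also have "\<dots> \<le> (3 + 2 * exp (-1)) * ?c"
    using B1 B2 B3 by (simp add: algebra_simps)
  finally show ?thesis .
qed

lemma cut_norm_tilt_lipschitz:
  fixes W1 W2 :: "'a \<times> 'a \<Rightarrow> real"
  assumes "0 \<le> a" "0 \<le> b" "W1 \<in> kernels M" "W2 \<in> kernels M"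
  shows "cut_norm M (\<lambda>z. tilt M a b W1 z - tilt M a b W2 z)
           \<le> (3 + 2 * exp (-1)) * cut_norm M (\<lambda>z. W1 z - W2 z)"
  unfolding cut_norm_test_pairs[of M "\<lambda>z. tilt M a b W1 z - tilt M a b W2 z"]
proof (rule cSUP_least)
  show "test_pairs M \<noteq> {}" using test_pairsI[of "\<lambda>_. 0" M "\<lambda>_. 0"] by auto
qed (use tilt_test_integral_bound[OF assms] in auto)

text \<open>The left marginal of the tilt is at most the left marginal damped by its own factor,
  since the right factor is at most 1.  No sign condition on \<open>W\<close> is needed.\<close>
lemma lmarg_tilt_le:
  assumes b: "0 \<le> b" and [measurable]: "W \<in> borel_measurable (M \<Otimes>\<^sub>M M)" and x: "x \<in> space M"
  shows "lmarg M (tilt M a b W) x \<le> ennreal (exp_neg a (lmarg M W x)) * lmarg M W x"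
proof -
  have "lmarg M (tilt M a b W) x \<le> (\<integral>\<^sup>+ y. ennreal (exp_neg a (lmarg M W x)) * ennreal (W (x, y)) \<partial>M)"
    unfolding lmarg_def[of M "tilt M a b W"]
  proof (rule nn_integral_mono)
    fix y
    have "W (x, y) * exp_neg b (rmarg M W y) \<le> max 0 (W (x, y))"
      using exp_neg_nonneg[of b] exp_neg_le_one[OF b]
      by (cases "0 \<le> W (x, y)") (auto intro: mult_left_le mult_nonpos_nonneg max.coboundedI1)
    then have "tilt M a b W (x, y) \<le> exp_neg a (lmarg M W x) * max 0 (W (x, y))"
      using exp_neg_nonneg[of a] by (simp add: tilt_def mult.assoc mult_left_mono)
    then show "ennreal (tilt M a b W (x, y)) \<le> ennreal (exp_neg a (lmarg M W x)) * ennreal (W (x, y))"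
      using exp_neg_nonneg[of a] by (auto simp: ennreal_mult[symmetric] ennreal_leI ennreal_neg max_def split: if_splits)
  qed
  also have "\<dots> = ennreal (exp_neg a (lmarg M W x)) * lmarg M W x"
    unfolding lmarg_def using x by (intro nn_integral_cmult) measurable
  finally show ?thesis .
qed

lemma lmarg_tilt_bound:
  assumes "0 < a" "0 \<le> b" "W \<in> borel_measurable (M \<Otimes>\<^sub>M M)"
  shows "(SUP x \<in> space M. lmarg M (tilt M a b W) x) \<le> ennreal (exp (-1) / a)"
  using assms by (intro SUP_least order_trans[OF lmarg_tilt_le exp_neg_times_le])

lemma rmarg_tilt_bound:
  assumes "0 \<le> a" "0 < b" "W \<in> borel_measurable (M \<Otimes>\<^sub>M M)"
  shows "(SUP y \<in> space M. rmarg M (tilt M a b W) y) \<le> ennreal (exp (-1) / b)"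
proof -
  have "rmarg M (tilt M a b W) = lmarg M (tilt M b a (kernel_transpose W))"
    by (simp flip: lmarg_transpose tilt_transpose)
  then show ?thesis using lmarg_tilt_bound assms by simp
qed

end

theorem mainTheorem12:
  fixes M :: "'a measure" and a b :: real
  assumes "prob_space M" and "0 \<le> a" and "0 \<le> b"
  shows "(\<forall>W1 \<in> kernels M. \<forall>W2 \<in> kernels M.
            cut_norm M (\<lambda>z. tilt M a b W1 z - tilt M a b W2 z)
              \<le> 7 * cut_norm M (\<lambda>z. W1 z - W2 z))
       \<and> (\<forall>W \<in> kernels M.
            (0 < a \<longrightarrow> (SUP x \<in> space M. lmarg M (tilt M a b W) x) \<le> ennreal (exp (-1) / a))
          \<and> (0 < b \<longrightarrow> (SUP y \<in> space M. rmarg M (tilt M a b W) y) \<le> ennreal (exp (-1) / b)))"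
proof -
  interpret sigma_finite_measure M
    using prob_space_imp_sigma_finite[OF assms(1)] .
  have lipschitz: "cut_norm M (\<lambda>z. tilt M a b W1 z - tilt M a b W2 z) \<le> 7 * cut_norm M (\<lambda>z. W1 z - W2 z)"
    if "W1 \<in> kernels M" "W2 \<in> kernels M" for W1 W2
  proof -
    have "exp (-1) \<le> (1::real)" by simp
    then have "3 + 2 * exp (-1) \<le> (7::real)" by linarith
    moreover have "0 \<le> cut_norm M (\<lambda>z. W1 z - W2 z)"
      using that by (intro cut_norm_nonneg) (auto simp: kernels_def)
    ultimately show ?thesis
      using cut_norm_tilt_lipschitz[OF assms(2,3) that] by (meson mult_right_mono order_trans)
  qed
  show ?thesis
    using lipschitz lmarg_tilt_bound[OF _ assms(3)] rmarg_tilt_bound[OF assms(2)]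
    by (auto simp: kernels_def)
qed

end
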